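(* Let $G$ be a periodic hypercentral group. If $G$ contains a finite contranormal subgroup, then $G$ has a normal abelian subgroup of finite index.
   Context: A subgroup $H$ of $G$ is contranormal in $G$ if its normal closure $H^G$ equals $G$. *)

theory Defs
  imports "HOL-Algebra.Algebra"
begin

definition periodic_group :: "('a, 'b) monoid_scheme \<Rightarrow> bool" where
  "periodic_group G \<longleftrightarrow> (\<forall>g\<in>carrier G. \<exists>n::nat. n > 0 \<and> g [^]\<^bsub>G\<^esub> n = \<one>\<^bsub>G\<^esub>)"

text \<open>One step of the upper central series: given H (= Z_alpha), the next term
  consists of the elements whose commutators with all of G lie in H
  (i.e. the preimage of the centre of G/H).  The hypercentre (the terminal term
  of the transfinite upper central series, starting at 1 and taking unions at
  limit ordinals) is the least fixed point of this monotone operator.\<close>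
definition central_step :: "('a, 'b) monoid_scheme \<Rightarrow> 'a set \<Rightarrow> 'a set" where
  "central_step G H = insert \<one>\<^bsub>G\<^esub>
     {g \<in> carrier G. \<forall>x\<in>carrier G.
        g \<otimes>\<^bsub>G\<^esub> x \<otimes>\<^bsub>G\<^esub> inv\<^bsub>G\<^esub> g \<otimes>\<^bsub>G\<^esub> inv\<^bsub>G\<^esub> x \<in> H}"

definition hypercenter :: "('a, 'b) monoid_scheme \<Rightarrow> 'a set" where
  "hypercenter G = lfp (central_step G)"

definition hypercentral :: "('a, 'b) monoid_scheme \<Rightarrow> bool" where
  "hypercentral G \<longleftrightarrow> hypercenter G = carrier G"

definition normal_closure :: "('a, 'b) monoid_scheme \<Rightarrow> 'a set \<Rightarrow> 'a set" where
  "normal_closure G H = generate G {g \<otimes>\<^bsub>G\<^esub> h \<otimes>\<^bsub>G\<^esub> inv\<^bsub>G\<^esub> g | g h. g \<in> carrier G \<and> h \<in> H}"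

definition contranormal :: "('a, 'b) monoid_scheme \<Rightarrow> 'a set \<Rightarrow> bool" where
  "contranormal G H \<longleftrightarrow> subgroup H G \<and> normal_closure G H = carrier G"

end

theory Submission
  imports Defs
begin

text \<open>Since \<open>H\<close> is finite, the lower central series of \<open>G\<close> stops shrinking on \<open>H\<close> at some term
  \<open>L\<close>, and contranormality of \<open>H\<close> gives \<open>G = L H\<close>; hence \<open>L\<close> has finite index and
  \<open>[L, G] = L\<close>.  Fix \<open>m > 0\<close> and put \<open>N = L' L\<^sup>m\<close>.  Modulo \<open>N\<close>, the \<open>H\<close>-conjugates of any
  \<open>y \<in> L\<close> generate a normal section with at most \<open>m\<^bsup>|H|\<^esup>\<close> elements, and hypercentrality
  puts such a section into the \<open>m\<^bsup>|H|\<^esup>\<close>-th term of the upper \<open>G\<close>-central series of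
  \<open>L/N\<close>; as this bound is uniform in \<open>y\<close>, \<open>[L, G] = L\<close> forces \<open>L = N\<close>.  Finally, for
  \<open>g \<in> L\<close> of order dividing \<open>m\<close> whose commutators with \<open>L\<close> are central in \<open>L\<close>, the map
  \<open>y \<mapsto> [g, y]\<close> is a homomorphism from \<open>L\<close> to an abelian group of exponent \<open>m\<close>, so it
  vanishes on \<open>L' L\<^sup>m = L\<close>; hypercentral induction makes all of \<open>L\<close> central in \<open>L\<close>.\<close>

definition commutator :: "('a, 'b) monoid_scheme \<Rightarrow> 'a \<Rightarrow> 'a \<Rightarrow> 'a" where
  "commutator G x y = x \<otimes>\<^bsub>G\<^esub> y \<otimes>\<^bsub>G\<^esub> inv\<^bsub>G\<^esub> x \<otimes>\<^bsub>G\<^esub> inv\<^bsub>G\<^esub> y"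

definition commutator_subgroup :: "('a, 'b) monoid_scheme \<Rightarrow> 'a set \<Rightarrow> 'a set \<Rightarrow> 'a set" where
  "commutator_subgroup G A B = generate G {commutator G a b | a b. a \<in> A \<and> b \<in> B}"

primrec lower_central_series :: "('a, 'b) monoid_scheme \<Rightarrow> nat \<Rightarrow> 'a set" where
  "lower_central_series G 0 = carrier G"
| "lower_central_series G (Suc n) = commutator_subgroup G (lower_central_series G n) (carrier G)"

text \<open>The upper central series of the \<open>G\<close>-group \<open>L/N\<close>, pulled back to \<open>L\<close>.\<close>

primrec relative_upper_central_series :: "('a, 'b) monoid_scheme \<Rightarrow> 'a set \<Rightarrow> 'a set \<Rightarrow> nat \<Rightarrow> 'a set" where
  "relative_upper_central_series G L N 0 = N"
| "relative_upper_central_series G L N (Suc k) =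
     {y \<in> L. \<forall>x\<in>carrier G. commutator G y x \<in> relative_upper_central_series G L N k}"

definition power_commutator_subgroup :: "('a, 'b) monoid_scheme \<Rightarrow> nat \<Rightarrow> 'a set \<Rightarrow> 'a set" where
  "power_commutator_subgroup G m L =
     generate G ({commutator G a b | a b. a \<in> L \<and> b \<in> L} \<union> {a [^]\<^bsub>G\<^esub> m | a. a \<in> L})"

lemma decreasing_chain_inter_finite_stabilizes:
  assumes "finite H" "\<And>n. A (Suc n) \<subseteq> A n"
  shows "\<exists>n. H \<inter> A (Suc n) = H \<inter> A n"
proof (rule ccontr)
  assume "\<not> ?thesis"
  then have decrease: "card (H \<inter> A (Suc n)) < card (H \<inter> A n)" for n
    using assms by (metis Int_mono order_refl psubsetI psubset_card_mono finite_Int)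
  have "card (H \<inter> A n) + n \<le> card (H \<inter> A 0)" for n
  proof (induction n)
    case (Suc n)
    then show ?case using decrease[of n] by simp
  qed simp
  from this[of "Suc (card (H \<inter> A 0))"] show False by simp
qed

context group
begin

section \<open>Commutators and conjugation\<close>

lemma mult_inv_cancel [simp]: "x \<in> carrier G \<Longrightarrow> y \<in> carrier G \<Longrightarrow> x \<otimes> (inv x \<otimes> y) = y"
  by (simp add: m_assoc [symmetric])

lemma inv_mult_cancel [simp]: "x \<in> carrier G \<Longrightarrow> y \<in> carrier G \<Longrightarrow> inv x \<otimes> (x \<otimes> y) = y"
  by (simp add: m_assoc [symmetric])

lemma commutator_closed [simp]:
  "x \<in> carrier G \<Longrightarrow> y \<in> carrier G \<Longrightarrow> commutator G x y \<in> carrier G"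
  by (simp add: commutator_def)

lemma commutator_eq_one_iff:
  assumes "x \<in> carrier G" "y \<in> carrier G"
  shows "commutator G x y = \<one> \<longleftrightarrow> x \<otimes> y = y \<otimes> x"
proof -
  have "commutator G x y = (x \<otimes> y) \<otimes> inv (y \<otimes> x)"
    using assms by (simp add: commutator_def m_assoc inv_mult_group)
  then show ?thesis
    using assms by (metis inv_closed inv_inv m_closed inv_equality r_inv)
qed

lemma commutator_mult_left:
  "\<lbrakk>y \<in> carrier G; z \<in> carrier G; x \<in> carrier G\<rbrakk> \<Longrightarrow>
    commutator G (y \<otimes> z) x = y \<otimes> commutator G z x \<otimes> inv y \<otimes> commutator G y x"
  by (simp add: commutator_def m_assoc inv_mult_group)

lemma commutator_mult_right:
  "\<lbrakk>g \<in> carrier G; y \<in> carrier G; z \<in> carrier G\<rbrakk> \<Longrightarrow>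
    commutator G g (y \<otimes> z) = commutator G g y \<otimes> (y \<otimes> commutator G g z \<otimes> inv y)"
  by (simp add: commutator_def m_assoc inv_mult_group)

lemma commutator_inv_left:
  "\<lbrakk>y \<in> carrier G; x \<in> carrier G\<rbrakk> \<Longrightarrow>
    commutator G (inv y) x = inv y \<otimes> inv (commutator G y x) \<otimes> y"
  by (simp add: commutator_def m_assoc inv_mult_group)

lemma conj_commutator:
  "\<lbrakk>g \<in> carrier G; y \<in> carrier G; x \<in> carrier G\<rbrakk> \<Longrightarrow>
    g \<otimes> commutator G y x \<otimes> inv g = commutator G (g \<otimes> y \<otimes> inv g) (g \<otimes> x \<otimes> inv g)"
  by (simp add: commutator_def m_assoc inv_mult_group)

lemma commutator_conj_left:
  "\<lbrakk>g \<in> carrier G; y \<in> carrier G; x \<in> carrier G\<rbrakk> \<Longrightarrow>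
    commutator G (g \<otimes> y \<otimes> inv g) x = g \<otimes> commutator G y (inv g \<otimes> x \<otimes> g) \<otimes> inv g"
  by (simp add: commutator_def m_assoc inv_mult_group)

lemma commutator_eq_mult_inv_conj:
  "\<lbrakk>u \<in> carrier G; x \<in> carrier G\<rbrakk> \<Longrightarrow> commutator G u x = u \<otimes> inv (x \<otimes> u \<otimes> inv x)"
  by (simp add: commutator_def m_assoc inv_mult_group)

lemma commutator_eq_conj_mult_inv:
  "\<lbrakk>g \<in> carrier G; y \<in> carrier G\<rbrakk> \<Longrightarrow> commutator G g y = (g \<otimes> y \<otimes> inv g) \<otimes> inv y"
  by (simp add: commutator_def m_assoc)

lemma conj_mult_eq_commutator_mult:
  "\<lbrakk>l \<in> carrier G; h \<in> carrier G; u \<in> carrier G\<rbrakk> \<Longrightarrow>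
    (l \<otimes> h) \<otimes> u \<otimes> inv (l \<otimes> h) = commutator G l (h \<otimes> u \<otimes> inv h) \<otimes> (h \<otimes> u \<otimes> inv h)"
  by (simp add: commutator_def m_assoc inv_mult_group)

lemma normal_commutator_left_closed:
  assumes "N \<lhd> G" "u \<in> N" "x \<in> carrier G"
  shows "commutator G u x \<in> N"
proof -
  have "u \<in> carrier G" "inv (x \<otimes> u \<otimes> inv x) \<in> N"
    using assms normal_imp_subgroup subgroup.mem_carrier subgroup.m_inv_closed normal.inv_op_closed2
    by (metis inv_closed m_closed)+
  then show ?thesis
    using assms commutator_eq_mult_inv_conj normal_imp_subgroup subgroup.m_closed by metis
qed

lemma normal_commutator_right_closed:
  assumes "N \<lhd> G" "x \<in> carrier G" "u \<in> N"
  shows "commutator G x u \<in> N"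
proof -
  have "u \<in> carrier G" "x \<otimes> u \<otimes> inv x \<in> N"
    using assms normal_imp_subgroup subgroup.mem_carrier normal.inv_op_closed2 by metis+
  then show ?thesis
    using assms commutator_eq_conj_mult_inv normal_imp_subgroup subgroup.m_closed subgroup.m_inv_closed
    by metis
qed

lemma commutator_nat_pow_left:
  assumes g: "g \<in> carrier G" and y: "y \<in> carrier G"
    and comm: "g \<otimes> commutator G g y = commutator G g y \<otimes> g"
  shows "commutator G (g [^] k) y = commutator G g y [^] (k::nat)"
proof (induction k)
  case 0
  show ?case using y by (simp add: commutator_def)
next
  case (Suc k)
  have "g [^] k \<otimes> commutator G g y = commutator G g y \<otimes> g [^] k"
    using group_commutes_pow[OF comm] g y by simp
  then have "commutator G (g [^] k \<otimes> g) y = commutator G g y \<otimes> commutator G g y [^] k"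
    using g y Suc.IH by (simp add: commutator_mult_left m_assoc [symmetric]) (simp add: m_assoc)
  then show ?case using g y nat_pow_Suc2[of "commutator G g y" k] by simp
qed

lemma conj_nat_pow:
  assumes "g \<in> carrier G" "a \<in> carrier G"
  shows "g \<otimes> a [^] (k::nat) \<otimes> inv g = (g \<otimes> a \<otimes> inv g) [^] k"
proof (induction k)
  case (Suc k)
  have "(g \<otimes> a \<otimes> inv g) [^] Suc k = (g \<otimes> a [^] k \<otimes> inv g) \<otimes> (g \<otimes> a \<otimes> inv g)"
    using Suc by simp
  also have "\<dots> = g \<otimes> a [^] Suc k \<otimes> inv g" using assms by (simp add: m_assoc)
  finally show ?case by simp
qed (use assms in simp)

lemma generate_conj_closed:
  assumes S: "S \<subseteq> carrier G" and g: "g \<in> carrier G"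
    and closed: "\<And>s. s \<in> S \<Longrightarrow> g \<otimes> s \<otimes> inv g \<in> S"
  shows "v \<in> generate G S \<Longrightarrow> g \<otimes> v \<otimes> inv g \<in> generate G S"
proof (induction v rule: generate.induct)
  case one
  then show ?case using g generate.one by simp
next
  case (incl h)
  then show ?case by (rule generate.incl[OF closed])
next
  case (inv h)
  then have "g \<otimes> inv h \<otimes> inv g = inv (g \<otimes> h \<otimes> inv g)"
    using g S by (auto simp: inv_mult_group m_assoc)
  then show ?case using generate_m_inv_closed[OF S generate.incl[OF closed[OF inv]]] by simp
next
  case (eng h\<^sub>1 h\<^sub>2)
  have "g \<otimes> (h\<^sub>1 \<otimes> h\<^sub>2) \<otimes> inv g = (g \<otimes> h\<^sub>1 \<otimes> inv g) \<otimes> (g \<otimes> h\<^sub>2 \<otimes> inv g)"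
    using eng.hyps[THEN generate_in_carrier[OF S]] g by (simp add: m_assoc)
  then show ?case using generate.eng[OF eng.IH] by simp
qed

lemma generate_conjugates_conj_closed:
  assumes H: "subgroup H G" and y: "y \<in> carrier G" and h: "h \<in> H"
    and v: "v \<in> generate G ((\<lambda>h. h \<otimes> y \<otimes> inv h) ` H)"
  shows "h \<otimes> v \<otimes> inv h \<in> generate G ((\<lambda>h. h \<otimes> y \<otimes> inv h) ` H)"
proof (rule generate_conj_closed[OF _ subgroup.mem_carrier[OF H h] _ v])
  show "(\<lambda>h. h \<otimes> y \<otimes> inv h) ` H \<subseteq> carrier G" using y subgroup.mem_carrier[OF H] by auto
  fix s assume "s \<in> (\<lambda>h. h \<otimes> y \<otimes> inv h) ` H"
  then obtain h' where h': "h' \<in> H" "s = h' \<otimes> y \<otimes> inv h'" by blast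
  then have "h \<otimes> s \<otimes> inv h = (h \<otimes> h') \<otimes> y \<otimes> inv (h \<otimes> h')"
    using h y subgroup.mem_carrier[OF H] by (simp add: m_assoc inv_mult_group)
  then show "h \<otimes> s \<otimes> inv h \<in> (\<lambda>h. h \<otimes> y \<otimes> inv h) ` H"
    using subgroup.m_closed[OF H h h'(1)] by blast
qed

section \<open>Hypercentral induction\<close>

lemma hypercentral_induct:
  assumes "hypercentral G" "\<one> \<in> S"
    and step: "\<And>g. \<lbrakk>g \<in> carrier G; \<forall>x\<in>carrier G. commutator G g x \<in> S\<rbrakk> \<Longrightarrow> g \<in> S"
  shows "carrier G \<subseteq> S"
proof -
  have "central_step G S \<subseteq> S"
    using assms(2) step unfolding central_step_def commutator_def by blast
  then have "lfp (central_step G) \<subseteq> S" by (rule lfp_lowerbound)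
  then show ?thesis using assms(1) unfolding hypercentral_def hypercenter_def by simp
qed

lemma hypercentral_exists_commutators_in:
  assumes "hypercentral G" "U \<subseteq> carrier G" "\<one> \<in> M"
    and "\<And>u x. \<lbrakk>u \<in> U; x \<in> carrier G\<rbrakk> \<Longrightarrow> commutator G u x \<in> U"
    and "\<not> U \<subseteq> M"
  shows "\<exists>u\<in>U. u \<notin> M \<and> (\<forall>x\<in>carrier G. commutator G u x \<in> M)"
proof (rule ccontr)
  assume "\<not> ?thesis"
  then have "carrier G \<subseteq> {g. g \<in> U \<longrightarrow> g \<in> M}"
    using assms(3,4) by (intro hypercentral_induct[OF assms(1)]) auto
  then show False using assms(2,5) by blast
qed

section \<open>The lower central series and contranormal subgroups\<close>

lemma commutator_subgroup_normal:
  assumes "A \<lhd> G"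
  shows "commutator_subgroup G A (carrier G) \<lhd> G"
  unfolding commutator_subgroup_def
proof (rule normal_generateI)
  have "A \<subseteq> carrier G" using assms normal_imp_subgroup subgroup.subset by blast
  then show "{commutator G a x |a x. a \<in> A \<and> x \<in> carrier G} \<subseteq> carrier G" by auto
  fix h g
  assume "h \<in> {commutator G a x |a x. a \<in> A \<and> x \<in> carrier G}" and g: "g \<in> carrier G"
  then obtain a x where ax: "h = commutator G a x" "a \<in> A" "x \<in> carrier G" by blast
  then have "g \<otimes> h \<otimes> inv g = commutator G (g \<otimes> a \<otimes> inv g) (g \<otimes> x \<otimes> inv g)"
    using g \<open>A \<subseteq> carrier G\<close> conj_commutator by blast
  moreover have "g \<otimes> a \<otimes> inv g \<in> A" by (rule normal.inv_op_closed2[OF assms g ax(2)])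
  moreover have "g \<otimes> x \<otimes> inv g \<in> carrier G" using g ax(3) by simp
  ultimately show "g \<otimes> h \<otimes> inv g \<in> {commutator G a x |a x. a \<in> A \<and> x \<in> carrier G}"
    by blast
qed

lemma commutator_subgroup_subset:
  assumes "A \<lhd> G"
  shows "commutator_subgroup G A (carrier G) \<subseteq> A"
  unfolding commutator_subgroup_def
  by (rule generate_subgroup_incl)
     (auto intro: normal_commutator_left_closed[OF assms] normal_imp_subgroup[OF assms])

lemma lower_central_series_normal: "lower_central_series G n \<lhd> G"
  by (induction n) (simp_all add: normal_self commutator_subgroup_normal)

lemma lower_central_series_subgroup: "subgroup (lower_central_series G n) G"
  by (rule normal_imp_subgroup[OF lower_central_series_normal])

lemma lower_central_series_Suc_subset: "lower_central_series G (Suc n) \<subseteq> lower_central_series G n"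
  by (simp add: commutator_subgroup_subset lower_central_series_normal)

text \<open>Writing \<open>g = k h\<close> with \<open>k\<close> in the \<open>n\<close>-th term of the series and \<open>h \<in> H\<close>,
  a conjugate \<open>g h\<^sub>0 g\<inverse>\<close> of \<open>h\<^sub>0 \<in> H\<close> equals \<open>[k, h\<^sub>1] h\<^sub>1\<close> with \<open>h\<^sub>1 = h h\<^sub>0 h\<inverse> \<in> H\<close>.\<close>

lemma contranormal_lower_central_series_mult:
  assumes "contranormal G H"
  shows "carrier G = lower_central_series G n <#> H"
proof (induction n)
  case 0
  show ?case using assms set_mult_carrier_idem unfolding contranormal_def by simp
next
  case (Suc n)
  let ?K = "lower_central_series G n" and ?K' = "lower_central_series G (Suc n)"
  have H: "subgroup H G" and closure: "normal_closure G H = carrier G"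
    using assms unfolding contranormal_def by blast+
  have K: "?K \<subseteq> carrier G"
    by (rule subgroup.subset[OF lower_central_series_subgroup])
  have K': "?K' \<lhd> G"
    by (rule lower_central_series_normal)
  have "g \<otimes> h\<^sub>0 \<otimes> inv g \<in> ?K' <#> H" if g: "g \<in> carrier G" and h\<^sub>0: "h\<^sub>0 \<in> H" for g h\<^sub>0
  proof -
    obtain k h where kh: "k \<in> ?K" "h \<in> H" "g = k \<otimes> h"
      using g Suc.IH unfolding set_mult_def by blast
    define h\<^sub>1 where "h\<^sub>1 = h \<otimes> h\<^sub>0 \<otimes> inv h"
    have h\<^sub>1: "h\<^sub>1 \<in> H"
      unfolding h\<^sub>1_def using H kh(2) h\<^sub>0 by (meson subgroup.m_closed subgroup.m_inv_closed)
    have "commutator G k h\<^sub>1 \<in> ?K'"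
      using kh(1) h\<^sub>1 subgroup.mem_carrier[OF H] unfolding lower_central_series.simps commutator_subgroup_def
      by (blast intro: generate.incl)
    moreover have "g \<otimes> h\<^sub>0 \<otimes> inv g = commutator G k h\<^sub>1 \<otimes> h\<^sub>1"
      unfolding kh(3) h\<^sub>1_def
      using kh(1,2) h\<^sub>0 K subgroup.mem_carrier[OF H] by (simp add: conj_mult_eq_commutator_mult subsetD)
    ultimately show ?thesis using h\<^sub>1 unfolding set_mult_def by blast
  qed
  then have "{g \<otimes> h \<otimes> inv g | g h. g \<in> carrier G \<and> h \<in> H} \<subseteq> ?K' <#> H" by blast
  then have "normal_closure G H \<subseteq> ?K' <#> H"
    unfolding normal_closure_def by (rule generate_subgroup_incl[OF _ mult_norm_subgroup[OF K' H]])
  moreover have "?K' <#> H \<subseteq> carrier G"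
    using K' H by (simp add: normal_imp_subgroup setmult_subset_G subgroup.subset)
  ultimately show ?case using closure by blast
qed

text \<open>The traces on the finite set \<open>H\<close> of the lower central series stop decreasing at some
  term \<open>L\<close>; as \<open>G = [L, G] H\<close>, each \<open>l \<in> L\<close> is \<open>k h\<close> with \<open>k \<in> [L, G]\<close> and
  \<open>h = k\<inverse> l \<in> H \<inter> L \<subseteq> [L, G]\<close>.\<close>

lemma contranormal_finite_imp_perfect_normal:
  assumes "finite H" "contranormal G H"
  shows "\<exists>L. L \<lhd> G \<and> commutator_subgroup G L (carrier G) = L \<and> carrier G = L <#> H"
proof -
  obtain n where stable: "H \<inter> lower_central_series G (Suc n) = H \<inter> lower_central_series G n"
    using decreasing_chain_inter_finite_stabilizes[OF assms(1), of "lower_central_series G"]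
      lower_central_series_Suc_subset by blast
  let ?L = "lower_central_series G n" and ?L' = "lower_central_series G (Suc n)"
  have L: "subgroup ?L G" and L': "subgroup ?L' G" by (rule lower_central_series_subgroup)+
  have H: "subgroup H G" using assms(2) unfolding contranormal_def by blast
  have "?L \<subseteq> ?L'"
  proof
    fix l assume l: "l \<in> ?L"
    then have "l \<in> carrier G" using subgroup.mem_carrier[OF L] by simp
    then obtain k h where kh: "k \<in> ?L'" "h \<in> H" "l = k \<otimes> h"
      using contranormal_lower_central_series_mult[OF assms(2), of "Suc n"]
      unfolding set_mult_def by blast
    have "h = inv k \<otimes> l"
      using kh subgroup.mem_carrier[OF L'] subgroup.mem_carrier[OF H] by simp
    moreover have "inv k \<in> ?L"
      using kh(1) lower_central_series_Suc_subset subgroup.m_inv_closed[OF L] by blast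
    ultimately have "h \<in> H \<inter> ?L"
      using kh(2) l subgroup.m_closed[OF L] by simp
    then have "h \<in> ?L'" using stable by blast
    then show "l \<in> ?L'" using kh(1,3) subgroup.m_closed[OF L'] by simp
  qed
  then have "commutator_subgroup G ?L (carrier G) = ?L"
    using lower_central_series_Suc_subset by (simp add: subset_antisym)
  then show ?thesis
    using lower_central_series_normal contranormal_lower_central_series_mult[OF assms(2)] by blast
qed

lemma finite_rcosets_set_mult:
  assumes L: "subgroup L G" and H: "finite H" "H \<subseteq> carrier G" and LH: "carrier G = L <#> H"
  shows "finite (rcosets L)"
proof -
  have "rcosets L \<subseteq> (\<lambda>h. L #> h) ` H"
  proof
    fix R assume "R \<in> rcosets L"
    then obtain g where g: "g \<in> carrier G" "R = L #> g" unfolding RCOSETS_def by blast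
    then obtain l h where lh: "l \<in> L" "h \<in> H" "g = l \<otimes> h" using LH unfolding set_mult_def by blast
    then have "L #> g = (L #> l) #> h"
      using H(2) subgroup.subset[OF L] subgroup.mem_carrier[OF L] by (simp add: coset_mult_assoc subsetD)
    also have "\<dots> = L #> h" using lh(1) L subgroup.mem_carrier[OF L] by (simp add: coset_join2)
    finally show "R \<in> (\<lambda>h. L #> h) ` H" using g(2) lh(2) by blast
  qed
  then show ?thesis using H(1) finite_surj by blast
qed

section \<open>The relative upper central series\<close>

lemma commutator_preimage_subgroup:
  assumes L: "subgroup L G" and W: "W \<lhd> G"
  shows "subgroup {y \<in> L. \<forall>x\<in>carrier G. commutator G y x \<in> W} G"
proof -
  have W': "subgroup W G" by (rule normal_imp_subgroup[OF W])
  have Lc: "\<And>y. y \<in> L \<Longrightarrow> y \<in> carrier G" by (rule subgroup.mem_carrier[OF L])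
  show ?thesis
  proof (rule subgroupI)
    show "{y \<in> L. \<forall>x\<in>carrier G. commutator G y x \<in> W} \<subseteq> carrier G" using Lc by blast
    show "{y \<in> L. \<forall>x\<in>carrier G. commutator G y x \<in> W} \<noteq> {}"
      using subgroup.one_closed[OF L] subgroup.one_closed[OF W'] by (auto simp: commutator_def)
  next
    fix y assume y: "y \<in> {y \<in> L. \<forall>x\<in>carrier G. commutator G y x \<in> W}"
    have "commutator G (inv y) x \<in> W" if x: "x \<in> carrier G" for x
    proof -
      have "inv y \<otimes> inv (commutator G y x) \<otimes> y \<in> W"
        using y x Lc by (simp add: normal.inv_op_closed1[OF W] subgroup.m_inv_closed[OF W'])
      then show ?thesis using y x Lc by (simp add: commutator_inv_left)
    qed
    then show "inv y \<in> {y \<in> L. \<forall>x\<in>carrier G. commutator G y x \<in> W}"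
      using y subgroup.m_inv_closed[OF L] by blast
  next
    fix y z
    assume y: "y \<in> {y \<in> L. \<forall>x\<in>carrier G. commutator G y x \<in> W}"
      and z: "z \<in> {y \<in> L. \<forall>x\<in>carrier G. commutator G y x \<in> W}"
    have "commutator G (y \<otimes> z) x \<in> W" if x: "x \<in> carrier G" for x
    proof -
      have "y \<otimes> commutator G z x \<otimes> inv y \<in> W"
        using y z x Lc by (simp add: normal.inv_op_closed2[OF W])
      then show ?thesis using y z x Lc by (simp add: commutator_mult_left subgroup.m_closed[OF W'])
    qed
    then show "y \<otimes> z \<in> {y \<in> L. \<forall>x\<in>carrier G. commutator G y x \<in> W}"
      using y z subgroup.m_closed[OF L] by blast
  qed
qed

lemma commutator_preimage_normal:
  assumes L: "L \<lhd> G" and W: "W \<lhd> G"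
  shows "{y \<in> L. \<forall>x\<in>carrier G. commutator G y x \<in> W} \<lhd> G"
proof (rule normal_invI[OF commutator_preimage_subgroup[OF normal_imp_subgroup[OF L] W]])
  fix g y assume g: "g \<in> carrier G" and y: "y \<in> {y \<in> L. \<forall>x\<in>carrier G. commutator G y x \<in> W}"
  then have yc: "y \<in> carrier G" using subgroup.mem_carrier[OF normal_imp_subgroup[OF L]] by blast
  have "commutator G (g \<otimes> y \<otimes> inv g) x \<in> W" if x: "x \<in> carrier G" for x
  proof -
    have "g \<otimes> commutator G y (inv g \<otimes> x \<otimes> g) \<otimes> inv g \<in> W"
      using g y x by (simp add: normal.inv_op_closed2[OF W])
    then show ?thesis using g yc x by (simp add: commutator_conj_left)
  qed
  then show "g \<otimes> y \<otimes> inv g \<in> {y \<in> L. \<forall>x\<in>carrier G. commutator G y x \<in> W}"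
    using normal.inv_op_closed2[OF L g] y by blast
qed

lemma relative_upper_central_series_normal:
  assumes "L \<lhd> G" "N \<lhd> G"
  shows "relative_upper_central_series G L N k \<lhd> G"
  by (induction k) (simp_all add: assms commutator_preimage_normal)

lemma subset_relative_upper_central_series:
  assumes "N \<lhd> G" "N \<subseteq> L"
  shows "N \<subseteq> relative_upper_central_series G L N k"
proof (induction k)
  case (Suc k)
  then show ?case using assms normal_commutator_left_closed by auto
qed simp

lemma relative_upper_central_series_Suc_mono:
  assumes "N \<lhd> G" "N \<subseteq> L"
  shows "relative_upper_central_series G L N k \<subseteq> relative_upper_central_series G L N (Suc k)"
proof (induction k)
  case 0
  show ?case using subset_relative_upper_central_series[OF assms, of 1] by simp
next
  case (Suc k)
  then show ?case by auto
qed

lemma relative_upper_central_series_mono: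
  assumes "N \<lhd> G" "N \<subseteq> L" "k \<le> l"
  shows "relative_upper_central_series G L N k \<subseteq> relative_upper_central_series G L N l"
  using assms(3) by (induction l rule: dec_induct)
    (use relative_upper_central_series_Suc_mono[OF assms(1,2)] in blast)+

text \<open>Since \<open>[W\<^sub>k\<^sub>+\<^sub>1, G] \<subseteq> W\<^sub>k\<close>, a subgroup with \<open>[L, G] = L\<close> descends the series step by step.\<close>

lemma perfect_subset_relative_upper_central_series:
  assumes L: "L \<lhd> G" and N: "N \<lhd> G"
    and perfect: "commutator_subgroup G L (carrier G) = L"
  shows "L \<subseteq> relative_upper_central_series G L N c \<Longrightarrow> L \<subseteq> N"
proof (induction c)
  case (Suc c)
  have "subgroup (relative_upper_central_series G L N c) G"
    by (rule normal_imp_subgroup[OF relative_upper_central_series_normal[OF L N]])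
  moreover have "{commutator G l x | l x. l \<in> L \<and> x \<in> carrier G} \<subseteq> relative_upper_central_series G L N c"
    using Suc.prems by force
  ultimately have "commutator_subgroup G L (carrier G) \<subseteq> relative_upper_central_series G L N c"
    unfolding commutator_subgroup_def by (simp add: generate_subgroup_incl)
  then show ?case using perfect Suc.IH by simp
qed simp

text \<open>Hypercentrality supplies \<open>u \<in> U - W\<^sub>k\<close> with \<open>[u, G] \<subseteq> W\<^sub>k\<close>, so \<open>u \<in> W\<^sub>k\<^sub>+\<^sub>1\<close>; its
  \<open>N\<close>-coset is new because \<open>N \<subseteq> W\<^sub>k\<close>.\<close>

lemma relative_upper_central_series_rcosets_psubset:
  assumes hyp: "hypercentral G" and L: "L \<lhd> G" and N: "N \<lhd> G" and U: "U \<lhd> G"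
    and NU: "N \<subseteq> U" and UL: "U \<subseteq> L" and k: "\<not> U \<subseteq> relative_upper_central_series G L N k"
  shows "(\<lambda>u. N #> u) ` (U \<inter> relative_upper_central_series G L N k)
    \<subset> (\<lambda>u. N #> u) ` (U \<inter> relative_upper_central_series G L N (Suc k))"
proof -
  let ?W = "relative_upper_central_series G L N"
  have NL: "N \<subseteq> L" using NU UL by blast
  have Uc: "U \<subseteq> carrier G" using U normal_imp_subgroup subgroup.subset by blast
  have W: "subgroup (?W k) G"
    by (rule normal_imp_subgroup[OF relative_upper_central_series_normal[OF L N]])
  obtain u where u: "u \<in> U" "u \<notin> ?W k" "\<forall>x\<in>carrier G. commutator G u x \<in> ?W k"
    using hypercentral_exists_commutators_in[OF hyp Uc subgroup.one_closed[OF W] _ k]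
      normal_commutator_left_closed[OF U] by blast
  have "N #> u \<notin> (\<lambda>u. N #> u) ` (U \<inter> ?W k)"
  proof
    assume "N #> u \<in> (\<lambda>u. N #> u) ` (U \<inter> ?W k)"
    then obtain w where w: "w \<in> ?W k" "N #> u = N #> w" by blast
    have "u \<in> N #> w"
      using w(2) rcos_self[OF _ normal_imp_subgroup[OF N]] u(1) Uc by blast
    then obtain n where "n \<in> N" "u = n \<otimes> w" unfolding r_coset_def by blast
    then have "u \<in> ?W k"
      using w(1) subset_relative_upper_central_series[OF N NL] subgroup.m_closed[OF W] by blast
    then show False using u(2) by blast
  qed
  moreover have "u \<in> ?W (Suc k)" using u(1,3) UL by auto
  ultimately show ?thesis
    using u(1) relative_upper_central_series_Suc_mono[OF N NL, of k] by blast
qed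

lemma hypercentral_normal_subset_relative_upper_central_series:
  assumes hyp: "hypercentral G" and L: "L \<lhd> G" and N: "N \<lhd> G" and U: "U \<lhd> G"
    and NU: "N \<subseteq> U" and UL: "U \<subseteq> L" and fin: "finite ((\<lambda>u. N #> u) ` U)"
  shows "U \<subseteq> relative_upper_central_series G L N (card ((\<lambda>u. N #> u) ` U))"
proof -
  let ?W = "relative_upper_central_series G L N"
  define cosets where "cosets k = (\<lambda>u. N #> u) ` (U \<inter> ?W k)" for k
  have finite_cosets: "finite (cosets k)" for k
    using fin unfolding cosets_def by (rule finite_subset[rotated]) blast
  have grow: "U \<subseteq> ?W k \<or> k < card (cosets k)" for k
  proof (induction k)
    case 0
    have "\<one> \<in> U \<inter> ?W 0" using NU subgroup.one_closed[OF normal_imp_subgroup[OF N]] by auto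
    then have "cosets 0 \<noteq> {}" unfolding cosets_def by blast
    then show ?case using finite_cosets[of 0] by (simp add: card_gt_0_iff)
  next
    case (Suc k)
    show ?case
    proof (cases "U \<subseteq> ?W k")
      case True
      then show ?thesis
        using relative_upper_central_series_Suc_mono[OF N, of L k] NU UL by blast
    next
      case False
      then have "cosets k \<subset> cosets (Suc k)"
        unfolding cosets_def by (rule relative_upper_central_series_rcosets_psubset[OF hyp L N U NU UL])
      then have "card (cosets k) < card (cosets (Suc k))" by (rule psubset_card_mono[OF finite_cosets])
      then show ?thesis using Suc.IH False by simp
    qed
  qed
  have "card (cosets k) \<le> card ((\<lambda>u. N #> u) ` U)" for k
    unfolding cosets_def by (rule card_mono[OF fin]) blast
  then show ?thesis using grow less_le_not_le by blast
qed

section \<open>Subgroups generated by commuting elements of bounded order\<close>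

lemma nat_pow_mod_exponent:
  assumes "a \<in> carrier G" "a [^] m = \<one>"
  shows "a [^] (k::nat) = a [^] (k mod m)"
proof -
  have "a [^] k = (a [^] m) [^] (k div m) \<otimes> a [^] (k mod m)"
    using assms(1) by (simp add: nat_pow_pow nat_pow_mult mult_div_mod_eq)
  then show ?thesis using assms by simp
qed

lemma centralizer_subgroup:
  assumes a: "a \<in> carrier G"
  shows "subgroup {z \<in> carrier G. a \<otimes> z = z \<otimes> a} G"
proof (rule subgroupI)
  fix z assume "z \<in> {z \<in> carrier G. a \<otimes> z = z \<otimes> a}"
  then have z: "z \<in> carrier G" "a \<otimes> z = z \<otimes> a" by auto
  have "a \<otimes> inv z = inv z \<otimes> (z \<otimes> a) \<otimes> inv z" using z a by (simp add: m_assoc)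
  also have "\<dots> = inv z \<otimes> (a \<otimes> z) \<otimes> inv z" using z by simp
  also have "\<dots> = inv z \<otimes> a" using z(1) a by (simp add: m_assoc)
  finally show "inv z \<in> {z \<in> carrier G. a \<otimes> z = z \<otimes> a}" using z by simp
next
  fix z w
  assume "z \<in> {z \<in> carrier G. a \<otimes> z = z \<otimes> a}" "w \<in> {z \<in> carrier G. a \<otimes> z = z \<otimes> a}"
  then show "z \<otimes> w \<in> {z \<in> carrier G. a \<otimes> z = z \<otimes> a}"
    using a by (simp add: m_assoc [symmetric]) (simp add: m_assoc)
qed (use a in auto)

lemma powers_mult_subgroup:
  assumes a: "a \<in> carrier G" and T: "subgroup T G" and comm: "\<And>t. t \<in> T \<Longrightarrow> a \<otimes> t = t \<otimes> a"
    and exp: "a [^] (m::nat) = \<one>" and m: "0 < m"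
  shows "subgroup ((\<lambda>(i, t). a [^] i \<otimes> t) ` ({..<m} \<times> T)) G" (is "subgroup ?P G")
proof (rule subgroupI)
  have P: "x \<in> ?P \<longleftrightarrow> (\<exists>i t. i < m \<and> t \<in> T \<and> x = a [^] i \<otimes> t)" for x by auto
  have Tc: "\<And>t. t \<in> T \<Longrightarrow> t \<in> carrier G" by (rule subgroup.mem_carrier[OF T])
  have pow_comm: "a [^] i \<otimes> t = t \<otimes> a [^] i" if "t \<in> T" for i :: nat and t
    using that a comm Tc by (auto intro: group_commutes_pow)
  show "?P \<subseteq> carrier G" using a Tc by (auto intro!: m_closed nat_pow_closed)
  show "?P \<noteq> {}" using m subgroup.one_closed[OF T] by auto
  {
    fix x assume "x \<in> ?P"
    then obtain i t where it: "i < m" "t \<in> T" "x = a [^] i \<otimes> t" by auto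
    have "a [^] ((m - i) mod m) \<otimes> a [^] i = \<one>"
      using it(1) a exp by (simp add: nat_pow_mult nat_pow_mod_exponent[symmetric])
    then have "inv (a [^] i) = a [^] ((m - i) mod m)" using a by (simp add: inv_equality)
    then have "inv x = a [^] ((m - i) mod m) \<otimes> inv t"
      using it(2,3) a Tc pow_comm[OF subgroup.m_inv_closed[OF T it(2)]] by (simp add: inv_mult_group)
    then show "inv x \<in> ?P"
      unfolding P using subgroup.m_inv_closed[OF T it(2)] mod_less_divisor[OF m] by blast
  next
    fix x y assume "x \<in> ?P" "y \<in> ?P"
    then obtain i j :: nat and t s where it: "t \<in> T" "x = a [^] i \<otimes> t" and js: "s \<in> T" "y = a [^] j \<otimes> s"
      unfolding P by blast
    have ts: "t \<in> carrier G" "s \<in> carrier G" using it js Tc by auto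
    have "x \<otimes> y = a [^] i \<otimes> (t \<otimes> a [^] j) \<otimes> s" using it js ts a by (simp add: m_assoc)
    also have "\<dots> = a [^] i \<otimes> (a [^] j \<otimes> t) \<otimes> s" using pow_comm[OF it(1)] by simp
    also have "\<dots> = a [^] (i + j) \<otimes> (t \<otimes> s)"
      using ts a by (simp add: m_assoc [symmetric] nat_pow_mult)
    also have "\<dots> = a [^] ((i + j) mod m) \<otimes> (t \<otimes> s)" using nat_pow_mod_exponent[OF a exp] by simp
    finally show "x \<otimes> y \<in> ?P"
      unfolding P using subgroup.m_closed[OF T it(1) js(1)] mod_less_divisor[OF m] by blast
  }
qed

lemma generate_insert_commuting_subset:
  assumes a: "a \<in> carrier G" and S: "S \<subseteq> carrier G" and comm: "\<And>s. s \<in> S \<Longrightarrow> a \<otimes> s = s \<otimes> a"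
    and exp: "a [^] (m::nat) = \<one>" and m: "0 < m"
  shows "generate G (insert a S) \<subseteq> (\<lambda>(i, t). a [^] i \<otimes> t) ` ({..<m} \<times> generate G S)"
proof (rule generate_subgroup_incl)
  have "generate G S \<subseteq> {z \<in> carrier G. a \<otimes> z = z \<otimes> a}"
    using S comm by (intro generate_subgroup_incl centralizer_subgroup[OF a]) auto
  then show "subgroup ((\<lambda>(i, t). a [^] i \<otimes> t) ` ({..<m} \<times> generate G S)) G"
    by (intro powers_mult_subgroup[OF a generate_is_subgroup[OF S] _ exp m]) auto
  have "a \<in> (\<lambda>(i, t). a [^] i \<otimes> t) ` ({..<m} \<times> generate G S)"
    using a m nat_pow_mod_exponent[OF a exp, of 1] generate.one
    by (intro rev_image_eqI[of "(1 mod m, \<one>)"]) auto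
  moreover have "s \<in> (\<lambda>(i, t). a [^] i \<otimes> t) ` ({..<m} \<times> generate G S)" if "s \<in> S" for s
    using that S m generate.incl[OF that] by (intro rev_image_eqI[of "(0, s)"]) auto
  ultimately show "insert a S \<subseteq> (\<lambda>(i, t). a [^] i \<otimes> t) ` ({..<m} \<times> generate G S)" by blast
qed

lemma card_generate_commuting_le:
  assumes "finite S" "S \<subseteq> carrier G" "\<And>a b. \<lbrakk>a \<in> S; b \<in> S\<rbrakk> \<Longrightarrow> a \<otimes> b = b \<otimes> a"
    and "\<And>a. a \<in> S \<Longrightarrow> a [^] m = \<one>" "0 < m"
  shows "finite (generate G S) \<and> card (generate G S) \<le> m ^ card S"
  using assms
proof (induction S rule: finite_induct)
  case empty
  then show ?case by (simp add: generate_empty)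
next
  case (insert a S)
  let ?P = "(\<lambda>(i, t). a [^] i \<otimes> t) ` ({..<m} \<times> generate G S)"
  have IH: "finite (generate G S) \<and> card (generate G S) \<le> m ^ card S"
    using insert by (intro insert.IH) auto
  have sub: "generate G (insert a S) \<subseteq> ?P"
    using insert.prems by (intro generate_insert_commuting_subset) auto
  have P: "finite ?P" using IH by simp
  have "card (generate G (insert a S)) \<le> card ?P" by (rule card_mono[OF P sub])
  also have "\<dots> \<le> m * card (generate G S)"
    using card_image_le[of "{..<m} \<times> generate G S"] IH by (simp add: card_cartesian_product)
  also have "\<dots> \<le> m ^ card (insert a S)" using IH insert.hyps by simp
  finally show ?case using finite_subset[OF sub P] by blast
qed

lemma card_rcosets_generate_le:
  assumes N: "N \<lhd> G" and S: "finite S" "S \<subseteq> carrier G"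
    and comm: "\<And>a b. \<lbrakk>a \<in> S; b \<in> S\<rbrakk> \<Longrightarrow> commutator G a b \<in> N"
    and exp: "\<And>a. a \<in> S \<Longrightarrow> a [^] m \<in> N" and m: "0 < m"
  shows "finite ((\<lambda>v. N #> v) ` generate G S) \<and> card ((\<lambda>v. N #> v) ` generate G S) \<le> m ^ card S"
proof -
  let ?pr = "\<lambda>v. N #> v"
  interpret Q: group "G Mod N" by (rule normal.factorgroup_is_group[OF N])
  interpret pr: group_hom G "G Mod N" ?pr
    using normal.r_coset_hom_Mod[OF N] by unfold_locales
  have Nsub: "subgroup N G" by (rule normal_imp_subgroup[OF N])
  have absorb: "?pr (n \<otimes> w) = ?pr w" if "n \<in> N" "w \<in> carrier G" for n w
    using that subgroup.mem_carrier[OF Nsub] coset_mult_assoc[OF subgroup.subset[OF Nsub]]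
      coset_join2[OF _ Nsub] by metis
  have "?pr a \<otimes>\<^bsub>G Mod N\<^esub> ?pr b = ?pr b \<otimes>\<^bsub>G Mod N\<^esub> ?pr a" if "a \<in> S" "b \<in> S" for a b
  proof -
    have ab: "a \<in> carrier G" "b \<in> carrier G" using that S by auto
    then have "a \<otimes> b = commutator G a b \<otimes> (b \<otimes> a)" by (simp add: commutator_def m_assoc)
    then have "?pr (a \<otimes> b) = ?pr (b \<otimes> a)"
      using absorb[OF comm[OF that] m_closed[OF ab(2,1)]] by simp
    then show ?thesis using ab by simp
  qed
  moreover have "?pr a [^]\<^bsub>G Mod N\<^esub> m = \<one>\<^bsub>G Mod N\<^esub>" if "a \<in> S" for a
    using that S exp coset_join2[OF _ Nsub] by (auto simp: pr.hom_nat_pow [symmetric])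
  ultimately have "finite (generate (G Mod N) (?pr ` S))
      \<and> card (generate (G Mod N) (?pr ` S)) \<le> m ^ card (?pr ` S)"
    using S m by (intro Q.card_generate_commuting_le) auto
  moreover have "m ^ card (?pr ` S) \<le> m ^ card S"
    using m S by (simp add: card_image_le power_increasing)
  ultimately show ?thesis using pr.generate_img[OF S(2)] by auto
qed

lemma normal_rcosets_set_mult:
  assumes N: "N \<lhd> G" and V: "V \<subseteq> carrier G"
  shows "(\<lambda>u. N #> u) ` (N <#> V) = (\<lambda>v. N #> v) ` V"
proof -
  have N': "subgroup N G" by (rule normal_imp_subgroup[OF N])
  have "N #> (n \<otimes> v) = N #> v" if "n \<in> N" "v \<in> V" for n v
    using that V subgroup.mem_carrier[OF N'] coset_mult_assoc[OF subgroup.subset[OF N']]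
      coset_join2[OF _ N'] by (metis subsetD)
  moreover have "v = \<one> \<otimes> v" if "v \<in> V" for v using that V by auto
  ultimately show ?thesis
    unfolding set_mult_def using subgroup.one_closed[OF N'] by (auto simp: image_iff)
qed

section \<open>The subgroup \<open>L' L\<^sup>m\<close>\<close>

lemma commutator_in_power_commutator_subgroup:
  "\<lbrakk>a \<in> L; b \<in> L\<rbrakk> \<Longrightarrow> commutator G a b \<in> power_commutator_subgroup G m L"
  unfolding power_commutator_subgroup_def by (blast intro: generate.incl)

lemma nat_pow_in_power_commutator_subgroup:
  "a \<in> L \<Longrightarrow> a [^] m \<in> power_commutator_subgroup G m L"
  unfolding power_commutator_subgroup_def by (blast intro: generate.incl)

lemma power_commutator_subgroup_subset:
  assumes "subgroup L G"
  shows "power_commutator_subgroup G m L \<subseteq> L"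
  unfolding power_commutator_subgroup_def
proof (rule generate_subgroup_incl[OF _ assms])
  have "commutator G a b \<in> L" if "a \<in> L" "b \<in> L" for a b
    using that assms unfolding commutator_def by (meson subgroup.m_closed subgroup.m_inv_closed)
  moreover have "a [^] m \<in> L" if "a \<in> L" for a
    using that assms by (induction m) (auto simp: subgroup.one_closed subgroup.m_closed)
  ultimately show "{commutator G a b |a b. a \<in> L \<and> b \<in> L} \<union> {a [^] m |a. a \<in> L} \<subseteq> L"
    by blast
qed

lemma power_commutator_subgroup_normal:
  assumes L: "L \<lhd> G"
  shows "power_commutator_subgroup G m L \<lhd> G"
  unfolding power_commutator_subgroup_def
proof (rule normal_generateI)
  have Lc: "L \<subseteq> carrier G" using L normal_imp_subgroup subgroup.subset by blast
  then show "{commutator G a b |a b. a \<in> L \<and> b \<in> L} \<union> {a [^] m |a. a \<in> L} \<subseteq> carrier G"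
    by (blast intro: commutator_closed nat_pow_closed)
  fix x g assume x: "x \<in> {commutator G a b |a b. a \<in> L \<and> b \<in> L} \<union> {a [^] m |a. a \<in> L}"
    and g: "g \<in> carrier G"
  have conj: "g \<otimes> a \<otimes> inv g \<in> L" if "a \<in> L" for a by (rule normal.inv_op_closed2[OF L g that])
  from x consider a b where "x = commutator G a b" "a \<in> L" "b \<in> L" | a where "x = a [^] m" "a \<in> L"
    by blast
  then show "g \<otimes> x \<otimes> inv g \<in> {commutator G a b |a b. a \<in> L \<and> b \<in> L} \<union> {a [^] m |a. a \<in> L}"
  proof cases
    case 1
    then have "g \<otimes> x \<otimes> inv g = commutator G (g \<otimes> a \<otimes> inv g) (g \<otimes> b \<otimes> inv g)"
      using g Lc by (simp add: conj_commutator subsetD)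
    then show ?thesis using conj 1 by blast
  next
    case 2
    then have "g \<otimes> x \<otimes> inv g = (g \<otimes> a \<otimes> inv g) [^] m"
      using g Lc by (simp add: conj_nat_pow subsetD)
    then show ?thesis using conj 2 by blast
  qed
qed

text \<open>Conjugation by \<open>l h\<close> with \<open>l \<in> L\<close> acts on \<open>V \<subseteq> L\<close> like conjugation by \<open>h\<close>, up to the
  commutator \<open>[l, h v h\<inverse>] \<in> N\<close>.\<close>

lemma normal_set_mult_normal:
  assumes N: "N \<lhd> G" and L: "subgroup L G" and H: "subgroup H G" and LH: "carrier G = L <#> H"
    and comm: "\<And>a b. \<lbrakk>a \<in> L; b \<in> L\<rbrakk> \<Longrightarrow> commutator G a b \<in> N"
    and V: "subgroup V G" "V \<subseteq> L" and conj: "\<And>h v. \<lbrakk>h \<in> H; v \<in> V\<rbrakk> \<Longrightarrow> h \<otimes> v \<otimes> inv h \<in> V"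
  shows "N <#> V \<lhd> G"
proof (rule normal_invI[OF mult_norm_subgroup[OF N V(1)]])
  fix x u assume x: "x \<in> carrier G" and "u \<in> N <#> V"
  then obtain n v where nv: "n \<in> N" "v \<in> V" "u = n \<otimes> v" unfolding set_mult_def by blast
  obtain l h where lh: "l \<in> L" "h \<in> H" "x = l \<otimes> h" using x LH unfolding set_mult_def by blast
  have N': "subgroup N G" by (rule normal_imp_subgroup[OF N])
  have carr: "l \<in> carrier G" "h \<in> carrier G" "n \<in> carrier G" "v \<in> carrier G"
    using lh nv subgroup.mem_carrier[OF L] subgroup.mem_carrier[OF H]
      subgroup.mem_carrier[OF N'] subgroup.mem_carrier[OF V(1)] by auto
  let ?w = "h \<otimes> v \<otimes> inv h"
  have w: "?w \<in> V" using conj lh(2) nv(2) .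
  have "x \<otimes> u \<otimes> inv x = (x \<otimes> n \<otimes> inv x) \<otimes> (x \<otimes> v \<otimes> inv x)"
    using x carr nv(3) by (simp add: m_assoc)
  also have "x \<otimes> v \<otimes> inv x = commutator G l ?w \<otimes> ?w"
    using lh(3) carr by (simp add: conj_mult_eq_commutator_mult)
  finally have "x \<otimes> u \<otimes> inv x = ((x \<otimes> n \<otimes> inv x) \<otimes> commutator G l ?w) \<otimes> ?w"
    using x carr by (simp add: m_assoc)
  moreover have "(x \<otimes> n \<otimes> inv x) \<otimes> commutator G l ?w \<in> N"
    using normal.inv_op_closed2[OF N x nv(1)] comm[OF lh(1)] w V(2) subgroup.m_closed[OF N'] by blast
  ultimately show "x \<otimes> u \<otimes> inv x \<in> N <#> V" using w unfolding set_mult_def by blast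
qed

text \<open>Modulo \<open>N = L' L\<^sup>m\<close>, the \<open>H\<close>-conjugates of \<open>y\<close> generate a finite abelian group of exponent
  \<open>m\<close> with at most \<open>|H|\<close> generators; since \<open>L\<close> acts trivially on \<open>L/N\<close> and \<open>G = L H\<close>, it is
  normal in \<open>G/N\<close>.\<close>

lemma obtain_bounded_normal_section:
  assumes L: "L \<lhd> G" and H: "subgroup H G" "finite H" and LH: "carrier G = L <#> H"
    and m: "0 < m" and y: "y \<in> L"
  defines "N \<equiv> power_commutator_subgroup G m L"
  obtains U where "U \<lhd> G" "y \<in> U" "N \<subseteq> U" "U \<subseteq> L"
    "finite ((\<lambda>u. N #> u) ` U)" "card ((\<lambda>u. N #> u) ` U) \<le> m ^ card H"
proof -
  let ?S = "(\<lambda>h. h \<otimes> y \<otimes> inv h) ` H"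
  let ?V = "generate G ?S"
  have L': "subgroup L G" by (rule normal_imp_subgroup[OF L])
  have Hc: "H \<subseteq> carrier G" by (rule subgroup.subset[OF H(1)])
  have N: "N \<lhd> G" "N \<subseteq> L"
    unfolding N_def by (rule power_commutator_subgroup_normal[OF L] power_commutator_subgroup_subset[OF L'])+
  have SL: "?S \<subseteq> L" using normal.inv_op_closed2[OF L] Hc y by blast
  then have Sc: "?S \<subseteq> carrier G" using subgroup.subset[OF L'] by blast
  have V: "subgroup ?V G" "?V \<subseteq> L"
    by (rule generate_is_subgroup[OF Sc], rule generate_subgroup_incl[OF SL L'])
  have "h \<otimes> v \<otimes> inv h \<in> ?V" if "h \<in> H" "v \<in> ?V" for h v
    using generate_conjugates_conj_closed[OF H(1) _ that] y subgroup.mem_carrier[OF L'] by blast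
  then have U: "N <#> ?V \<lhd> G"
    using normal_set_mult_normal[OF N(1) L' H(1) LH _ V] commutator_in_power_commutator_subgroup
    unfolding N_def by blast
  have "y \<in> ?V"
    using subgroup.one_closed[OF H(1)] y subgroup.mem_carrier[OF L'] by (force intro: generate.incl)
  then have "y \<in> N <#> ?V"
    using y subgroup.one_closed[OF normal_imp_subgroup[OF N(1)]] subgroup.mem_carrier[OF L']
    unfolding set_mult_def by force
  moreover have "N \<subseteq> N <#> ?V"
    using subgroup.one_closed[OF V(1)] subgroup.mem_carrier[OF normal_imp_subgroup[OF N(1)]]
    unfolding set_mult_def by force
  moreover have "N <#> ?V \<subseteq> L"
    using N(2) V(2) subgroup.m_closed[OF L'] unfolding set_mult_def by blast
  moreover have "finite ((\<lambda>v. N #> v) ` ?V) \<and> card ((\<lambda>v. N #> v) ` ?V) \<le> m ^ card ?S"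
  proof (rule card_rcosets_generate_le[OF N(1) finite_imageI[OF H(2)] Sc _ _ m])
    show "commutator G a b \<in> N" if "a \<in> ?S" "b \<in> ?S" for a b
      unfolding N_def using that SL by (blast intro: commutator_in_power_commutator_subgroup)
    show "a [^] m \<in> N" if "a \<in> ?S" for a
      unfolding N_def using that SL by (blast intro: nat_pow_in_power_commutator_subgroup)
  qed
  moreover have "m ^ card ?S \<le> m ^ card H"
    using m H(2) by (simp add: card_image_le power_increasing)
  ultimately show thesis
    using that[OF U] normal_rcosets_set_mult[OF N(1) subgroup.subset[OF V(1)]] by auto
qed

lemma perfect_subset_power_commutator_subgroup:
  assumes hyp: "hypercentral G" and L: "L \<lhd> G"
    and perfect: "commutator_subgroup G L (carrier G) = L"
    and H: "subgroup H G" "finite H" and LH: "carrier G = L <#> H" and m: "0 < m"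
  shows "L \<subseteq> power_commutator_subgroup G m L"
proof -
  let ?N = "power_commutator_subgroup G m L"
  let ?W = "relative_upper_central_series G L ?N"
  have N: "?N \<lhd> G" "?N \<subseteq> L"
    by (rule power_commutator_subgroup_normal[OF L],
        rule power_commutator_subgroup_subset[OF normal_imp_subgroup[OF L]])
  have "y \<in> ?W (m ^ card H)" if y: "y \<in> L" for y
  proof -
    obtain U where U: "U \<lhd> G" "y \<in> U" "?N \<subseteq> U" "U \<subseteq> L"
      and fin: "finite ((\<lambda>u. ?N #> u) ` U)" and card: "card ((\<lambda>u. ?N #> u) ` U) \<le> m ^ card H"
      using obtain_bounded_normal_section[OF L H LH m y] by blast
    have "U \<subseteq> ?W (card ((\<lambda>u. ?N #> u) ` U))"
      by (rule hypercentral_normal_subset_relative_upper_central_series[OF hyp L N(1) U(1,3,4) fin])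
    also have "\<dots> \<subseteq> ?W (m ^ card H)"
      by (rule relative_upper_central_series_mono[OF N card])
    finally show ?thesis using U(2) by blast
  qed
  then show ?thesis by (intro perfect_subset_relative_upper_central_series[OF L N(1) perfect]) blast
qed

lemma power_commutator_subgroup_subset_kernel:
  assumes L: "subgroup L G" and f: "f \<in> hom (G\<lparr>carrier := L\<rparr>) G"
    and comm: "\<And>a b. \<lbrakk>a \<in> L; b \<in> L\<rbrakk> \<Longrightarrow> f a \<otimes> f b = f b \<otimes> f a"
    and exp: "\<And>a. a \<in> L \<Longrightarrow> f a [^] m = \<one>"
  shows "power_commutator_subgroup G m L \<subseteq> kernel (G\<lparr>carrier := L\<rparr>) G f"
  unfolding power_commutator_subgroup_def
proof (rule generate_subgroup_incl)
  interpret f: group_hom "G\<lparr>carrier := L\<rparr>" G f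
    unfolding group_hom_def group_hom_axioms_def
    using f subgroup.subgroup_is_group[OF L is_group] is_group by blast
  show "subgroup (kernel (G\<lparr>carrier := L\<rparr>) G f) G"
    by (rule incl_subgroup[OF L f.subgroup_kernel])
  have fL: "f a \<in> carrier G" if "a \<in> L" for a using f that by (auto simp: hom_def)
  have f_mult: "f (a \<otimes> b) = f a \<otimes> f b" if "a \<in> L" "b \<in> L" for a b
    using f.hom_mult[of a b] that by simp
  have "f (commutator G a b) = \<one>" if ab: "a \<in> L" "b \<in> L" for a b
  proof -
    have "f (commutator G a b) = f a \<otimes> f b \<otimes> inv (f a) \<otimes> inv (f b)"
      using ab f.hom_inv[of a] f.hom_inv[of b] L
      by (simp add: commutator_def f_mult subgroup.m_closed subgroup.m_inv_closed)
    also have "\<dots> = commutator G (f a) (f b)" by (simp add: commutator_def)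
    finally show ?thesis using comm[OF ab] fL ab by (simp add: commutator_eq_one_iff)
  qed
  moreover have "f (a [^] m) = \<one>" if "a \<in> L" for a
    using that exp f.hom_nat_pow[of a m] by (simp add: nat_pow_consistent [symmetric])
  moreover have "commutator G a b \<in> L" "a [^] m \<in> L" if "a \<in> L" "b \<in> L" for a b
    using that power_commutator_subgroup_subset[OF L, of m]
      commutator_in_power_commutator_subgroup[OF that, of m]
      nat_pow_in_power_commutator_subgroup[OF that(1), of m] by (simp_all add: subsetD)
  ultimately show "{commutator G a b |a b. a \<in> L \<and> b \<in> L} \<union> {a [^] m |a. a \<in> L}
      \<subseteq> kernel (G\<lparr>carrier := L\<rparr>) G f"
    unfolding kernel_def by auto
qed

text \<open>Centrality of the commutators makes \<open>y \<mapsto> [g, y]\<close> a homomorphism from \<open>L\<close> into an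
  abelian group of exponent \<open>m\<close>, so it kills \<open>L' L\<^sup>m \<supseteq> L\<close>.\<close>

lemma central_commutators_imp_commute:
  assumes L: "subgroup L G" and cover: "L \<subseteq> power_commutator_subgroup G m L"
    and g: "g \<in> L" and exp: "g [^] m = \<one>"
    and central: "\<And>y z. \<lbrakk>y \<in> L; z \<in> L\<rbrakk> \<Longrightarrow> commutator G g y \<otimes> z = z \<otimes> commutator G g y"
    and y: "y \<in> L"
  shows "g \<otimes> y = y \<otimes> g"
proof -
  let ?f = "commutator G g"
  have Lc: "\<And>x. x \<in> L \<Longrightarrow> x \<in> carrier G" by (rule subgroup.mem_carrier[OF L])
  have fL: "?f y \<in> L" if "y \<in> L" for y
    using that g L unfolding commutator_def by (meson subgroup.m_closed subgroup.m_inv_closed)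
  have "?f \<in> hom (G\<lparr>carrier := L\<rparr>) G"
  proof (rule homI)
    fix y z assume "y \<in> carrier (G\<lparr>carrier := L\<rparr>)" "z \<in> carrier (G\<lparr>carrier := L\<rparr>)"
    then have yz: "y \<in> L" "z \<in> L" by simp_all
    have "?f (y \<otimes> z) = ?f y \<otimes> (y \<otimes> ?f z \<otimes> inv y)"
      using yz g Lc by (simp add: commutator_mult_right)
    also have "y \<otimes> ?f z \<otimes> inv y = ?f z \<otimes> y \<otimes> inv y" using central[OF yz(2,1)] by simp
    also have "\<dots> = ?f z" using yz g Lc by (simp add: m_assoc)
    finally show "?f (y \<otimes>\<^bsub>G\<lparr>carrier := L\<rparr>\<^esub> z) = ?f y \<otimes> ?f z" by simp
  qed (use g Lc in simp)
  moreover have "?f a \<otimes> ?f b = ?f b \<otimes> ?f a" if "a \<in> L" "b \<in> L" for a b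
    using central[OF that(1) fL[OF that(2)]] .
  moreover have "?f a [^] m = \<one>" if "a \<in> L" for a
  proof -
    have "g \<otimes> ?f a = ?f a \<otimes> g" using central[OF that g] by simp
    then have "commutator G (g [^] m) a = ?f a [^] m" using that g Lc by (simp add: commutator_nat_pow_left)
    then show ?thesis using exp that Lc by (simp add: commutator_def)
  qed
  ultimately have "power_commutator_subgroup G m L \<subseteq> kernel (G\<lparr>carrier := L\<rparr>) G ?f"
    by (rule power_commutator_subgroup_subset_kernel[OF L])
  then have "?f y = \<one>" using cover y by (auto simp: kernel_def)
  then show ?thesis using y g Lc by (simp add: commutator_eq_one_iff)
qed

lemma hypercentral_periodic_normal_commute:
  assumes hyp: "hypercentral G" and per: "periodic_group G" and L: "L \<lhd> G"
    and cover: "\<And>m. 0 < m \<Longrightarrow> L \<subseteq> power_commutator_subgroup G m L"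
    and a: "a \<in> L" and b: "b \<in> L"
  shows "a \<otimes> b = b \<otimes> a"
proof -
  have L': "subgroup L G" by (rule normal_imp_subgroup[OF L])
  have "carrier G \<subseteq> {g. g \<in> L \<longrightarrow> (\<forall>y\<in>L. g \<otimes> y = y \<otimes> g)}"
  proof (rule hypercentral_induct[OF hyp])
    show "\<one> \<in> {g. g \<in> L \<longrightarrow> (\<forall>y\<in>L. g \<otimes> y = y \<otimes> g)}"
      using subgroup.mem_carrier[OF L'] by simp
  next
    fix g assume g: "g \<in> carrier G"
      and IH: "\<forall>x\<in>carrier G. commutator G g x \<in> {g. g \<in> L \<longrightarrow> (\<forall>y\<in>L. g \<otimes> y = y \<otimes> g)}"
    have "g \<otimes> y = y \<otimes> g" if gL: "g \<in> L" and y: "y \<in> L" for y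
    proof -
      obtain m :: nat where m: "0 < m" "g [^] m = \<one>"
        using per g unfolding periodic_group_def by blast
      have "commutator G g u \<otimes> z = z \<otimes> commutator G g u" if "u \<in> L" "z \<in> L" for u z
        using IH normal_commutator_right_closed[OF L g] subgroup.mem_carrier[OF L'] that by blast
      then show ?thesis
        using central_commutators_imp_commute[OF L' cover[OF m(1)] gL m(2)] y by blast
    qed
    then show "g \<in> {g. g \<in> L \<longrightarrow> (\<forall>y\<in>L. g \<otimes> y = y \<otimes> g)}" by blast
  qed
  then show ?thesis using a b subgroup.mem_carrier[OF L'] by blast
qed

end

theorem corollary3p4:
  fixes G :: "('a, 'b) monoid_scheme"
  assumes "group G"
    and "periodic_group G"
    and "hypercentral G"
    and "\<exists>H. finite H \<and> contranormal G H"
  shows "\<exists>A. A \<lhd> G \<and> comm_group (G\<lparr>carrier := A\<rparr>) \<and> finite (rcosets\<^bsub>G\<^esub> A)"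
proof -
  interpret group G by (rule assms(1))
  obtain H where H: "finite H" "contranormal G H" using assms(4) by blast
  then have H': "subgroup H G" unfolding contranormal_def by blast
  obtain L where L: "L \<lhd> G" and perfect: "commutator_subgroup G L (carrier G) = L"
    and LH: "carrier G = L <#>\<^bsub>G\<^esub> H"
    using contranormal_finite_imp_perfect_normal[OF H] by blast
  have L': "subgroup L G" by (rule normal_imp_subgroup[OF L])
  have "L \<subseteq> power_commutator_subgroup G m L" if "0 < m" for m
    using perfect_subset_power_commutator_subgroup[OF assms(3) L perfect H' H(1) LH that] .
  then have "a \<otimes>\<^bsub>G\<^esub> b = b \<otimes>\<^bsub>G\<^esub> a" if "a \<in> L" "b \<in> L" for a b
    using hypercentral_periodic_normal_commute[OF assms(3,2) L] that by blast
  then have "comm_group (G\<lparr>carrier := L\<rparr>)"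
    by (intro group.group_comm_groupI[OF subgroup.subgroup_is_group[OF L' assms(1)]]) auto
  moreover have "finite (rcosets\<^bsub>G\<^esub> L)"
    by (rule finite_rcosets_set_mult[OF L' H(1) subgroup.subset[OF H'] LH])
  ultimately show ?thesis using L by blast
qed

end
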